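(* Let $S\subseteq\mathbb{R}^n$ be a closed set and $C\subseteq\mathbb{R}^n$ a convex $S$-free set. Assume $C=\{x\in\mathbb{R}^n : \alpha^\mathsf{T} x\le\beta\ \forall(\alpha,\beta)\in\Gamma\}$ for some family $\Gamma$ of inequalities, and that for every $(\alpha,\beta)\in\Gamma$ there is a point $x\in S\cap C$ that exposes $(\alpha,\beta)$ with respect to $C$. Then $C$ is maximal $S$-free.
   Context: A convex set $C$ is $S$-free if $\operatorname{int}(C)\cap S=\emptyset$, and maximal $S$-free if it is $S$-free and no $S$-free convex set strictly contains it. An inequality $\alpha^\mathsf{T} x\le\beta$ (written $(\alpha,\beta)$) is valid for $C$ if it holds on $C$; it is non-trivial if $\alpha\neq0$. A point $x_0$ exposes a valid inequality $(\alpha,\beta)$ with respect to convex $C$ if $\alpha^\mathsf{T} x_0=\beta$ and for every non-trivial valid inequality $\gamma^\mathsf{T} x\le\delta$ for $C$ with $\gamma^\mathsf{T} x_0=\delta$ there is $\mu>0$ with $\gamma=\mu\alpha$ and $\delta=\mu\beta$. *)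

theory Defs
  imports "HOL-Analysis.Analysis"
begin

definition S_free :: "'a::euclidean_space set \<Rightarrow> 'a set \<Rightarrow> bool" where
  "S_free S C \<longleftrightarrow> convex C \<and> interior C \<inter> S = {}"

definition maximal_S_free :: "'a::euclidean_space set \<Rightarrow> 'a set \<Rightarrow> bool" where
  "maximal_S_free S C \<longleftrightarrow> S_free S C \<and> (\<forall>D. S_free S D \<and> C \<subseteq> D \<longrightarrow> D = C)"

definition valid_ineq :: "'a::euclidean_space set \<Rightarrow> 'a \<Rightarrow> real \<Rightarrow> bool" where
  "valid_ineq C \<alpha> \<beta> \<longleftrightarrow> (\<forall>x\<in>C. \<alpha> \<bullet> x \<le> \<beta>)"

definition exposes :: "'a::euclidean_space set \<Rightarrow> 'a \<Rightarrow> 'a \<Rightarrow> real \<Rightarrow> bool" where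
  "exposes C x0 \<alpha> \<beta> \<longleftrightarrow> valid_ineq C \<alpha> \<beta> \<and> \<alpha> \<bullet> x0 = \<beta> \<and>
     (\<forall>\<gamma> \<delta>. \<gamma> \<noteq> 0 \<and> valid_ineq C \<gamma> \<delta> \<and> \<gamma> \<bullet> x0 = \<delta> \<longrightarrow>
        (\<exists>\<mu>>0. \<gamma> = \<mu> *\<^sub>R \<alpha> \<and> \<delta> = \<mu> * \<beta>))"

end

theory Submission
  imports Defs
begin

text \<open>Let \<open>D \<supseteq> C\<close> be convex and \<open>S\<close>-free. A point \<open>x \<in> S \<inter> C\<close> exposing \<open>(\<alpha>, \<beta>) \<in> \<Gamma>\<close>
  cannot lie in the interior of \<open>D\<close>, so \<open>D\<close> has a supporting hyperplane at \<open>x\<close>. That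
  inequality is valid for \<open>C\<close> and tight at \<open>x\<close>, hence a positive multiple of \<open>(\<alpha>, \<beta>)\<close>;
  so every inequality of \<open>\<Gamma>\<close> is valid for \<open>D\<close>, i.e. \<open>D \<subseteq> C\<close>.\<close>

lemma convex_supporting_hyperplane_not_interior:
  fixes D :: "'a::euclidean_space set"
  assumes "convex D" "x \<in> D" "x \<notin> interior D"
  obtains a where "a \<noteq> 0" "\<And>y. y \<in> D \<Longrightarrow> a \<bullet> y \<le> a \<bullet> x"
proof (cases "interior D = {}")
  case True
  then obtain a b where "a \<noteq> 0" and hyp: "D \<subseteq> {y. a \<bullet> y = b}"
    using empty_interior_subset_hyperplane \<open>convex D\<close> by metis
  moreover have "a \<bullet> y \<le> a \<bullet> x" if "y \<in> D" for y
  proof -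
    have "a \<bullet> y = b" "a \<bullet> x = b"
      using hyp \<open>x \<in> D\<close> that by blast+
    then show ?thesis by simp
  qed
  ultimately show ?thesis
    using that by blast
next
  case False
  then have "x \<notin> rel_interior D"
    using \<open>x \<notin> interior D\<close> by (simp add: rel_interior_nonempty_interior)
  moreover have "x \<in> closure D"
    using \<open>x \<in> D\<close> closure_subset by blast
  ultimately obtain a where "a \<noteq> 0" and supp: "\<And>y. y \<in> closure D \<Longrightarrow> a \<bullet> x \<le> a \<bullet> y"
    using supporting_hyperplane_relative_frontier[OF \<open>convex D\<close>] by metis
  moreover have "(- a) \<bullet> y \<le> (- a) \<bullet> x" if "y \<in> D" for y
    using supp that closure_subset by force
  ultimately show ?thesis
    using that[of "- a"] by simp
qed

lemma exposes_valid_ineq_convex_superset: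
  fixes C D :: "'a::euclidean_space set"
  assumes exp: "exposes C x \<alpha> \<beta>" and "x \<in> C" "C \<subseteq> D" "convex D" "x \<notin> interior D"
  shows "valid_ineq D \<alpha> \<beta>"
proof -
  obtain g where "g \<noteq> 0" and supp: "\<And>y. y \<in> D \<Longrightarrow> g \<bullet> y \<le> g \<bullet> x"
    using convex_supporting_hyperplane_not_interior assms by blast
  then have "valid_ineq C g (g \<bullet> x)"
    using \<open>C \<subseteq> D\<close> unfolding valid_ineq_def by blast
  then obtain \<mu> where "\<mu> > 0" "g = \<mu> *\<^sub>R \<alpha>" "g \<bullet> x = \<mu> * \<beta>"
    using exp \<open>g \<noteq> 0\<close> unfolding exposes_def by blast
  then have "\<mu> * (\<alpha> \<bullet> y) \<le> \<mu> * \<beta>" if "y \<in> D" for y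
    using supp[OF that] by simp
  with \<open>\<mu> > 0\<close> show ?thesis
    unfolding valid_ineq_def by simp
qed

theorem theorem2:
  fixes S C :: "'a::euclidean_space set" and \<Gamma> :: "('a \<times> real) set"
  assumes "closed S"
    and "S_free S C"
    and "C = {x. \<forall>(\<alpha>, \<beta>)\<in>\<Gamma>. \<alpha> \<bullet> x \<le> \<beta>}"
    and "\<forall>(\<alpha>, \<beta>)\<in>\<Gamma>. \<exists>x\<in>S \<inter> C. exposes C x \<alpha> \<beta>"
  shows "maximal_S_free S C"
  unfolding maximal_S_free_def
proof (intro conjI allI impI)
  show "S_free S C" by fact
  fix D assume "S_free S D \<and> C \<subseteq> D"
  then have "convex D" "interior D \<inter> S = {}" "C \<subseteq> D"
    by (auto simp: S_free_def)
  have "valid_ineq D \<alpha> \<beta>" if "(\<alpha>, \<beta>) \<in> \<Gamma>" for \<alpha> \<beta>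
  proof -
    obtain x where "x \<in> S" "x \<in> C" "exposes C x \<alpha> \<beta>"
      using assms(4) \<open>(\<alpha>, \<beta>) \<in> \<Gamma>\<close> by fastforce
    moreover from \<open>x \<in> S\<close> have "x \<notin> interior D"
      using \<open>interior D \<inter> S = {}\<close> by blast
    ultimately show ?thesis
      using exposes_valid_ineq_convex_superset[OF _ _ \<open>C \<subseteq> D\<close> \<open>convex D\<close>] by blast
  qed
  then have "D \<subseteq> C"
    unfolding assms(3) valid_ineq_def by blast
  with \<open>C \<subseteq> D\<close> show "D = C" by blast
qed

end
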